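(* For every bunched context $\Delta(-)$ and formulas $\varphi,\psi,\chi$: (i) if $\Delta(\varphi\wedge\psi)\vdash_{\mathsf{cf}}\chi$ then $\Delta(\varphi\mathbin{;}\psi)\vdash_{\mathsf{cf}}\chi$; (ii) if $\Delta(\varphi\ast\psi)\vdash_{\mathsf{cf}}\chi$ then $\Delta(\varphi\mathbin{,}\psi)\vdash_{\mathsf{cf}}\chi$; (iii) if $\Delta(\top)\vdash_{\mathsf{cf}}\chi$ then $\Delta(\varnothing_a)\vdash_{\mathsf{cf}}\chi$; (iv) if $\Delta(\mathsf{emp})\vdash_{\mathsf{cf}}\chi$ then $\Delta(\varnothing_m)\vdash_{\mathsf{cf}}\chi$.
   Context: Formulas of BI: $\varphi,\psi ::= \top \mid \bot \mid \varphi\wedge\psi \mid \varphi\vee\psi \mid \varphi\to\psi \mid \mathsf{emp} \mid \varphi\ast\psi \mid \varphi -\!\!\ast\, \psi \mid a$, $a\in\mathrm{Atom}$. Bunches are finite binary trees whose leaves are formulas or empty bunches $\varnothing_m,\varnothing_a$ and whose internal nodes are labelled by the multiplicative comma ($\Delta_1\mathbin{,}\Delta_2$) or the additive semicolon ($\Delta_1\mathbin{;}\Delta_2$). A bunched context $\Delta(-)$ is a bunch with one leaf replaced by a hole; $\Delta(\Gamma)$ fills it with $\Gamma$. Bunch equivalence $\equiv$ is the least equivalence relation making $\mathbin{,}$ commutative, associative with unit $\varnothing_m$, $\mathbin{;}$ commutative, associative with unit $\varnothing_a$, and closed under contexts. The cut-free BI sequent calculus ($\Delta\vdash_{\mathsf{cf}}\varphi$)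 has the rules: (ax) $a\vdash a$ for atoms $a$; (equiv) from $\Delta'\vdash\varphi$, $\Delta\equiv\Delta'$ infer $\Delta\vdash\varphi$; (W;) from $\Delta(\Delta_1)\vdash\varphi$ infer $\Delta(\Delta_1\mathbin{;}\Delta_2)\vdash\varphi$; (C;) from $\Delta(\Delta_1\mathbin{;}\Delta_1)\vdash\varphi$ infer $\Delta(\Delta_1)\vdash\varphi$; (empR) $\varnothing_m\vdash\mathsf{emp}$; (empL) from $\Delta(\varnothing_m)\vdash\varphi$ infer $\Delta(\mathsf{emp})\vdash\varphi$; ($\ast$R) from $\Delta_1\vdash\varphi$, $\Delta_2\vdash\psi$ infer $\Delta_1\mathbin{,}\Delta_2\vdash\varphi\ast\psi$; ($\ast$L) from $\Delta(\varphi\mathbin{,}\psi)\vdash\chi$ infer $\Delta(\varphi\ast\psi)\vdash\chi$; ($-\!\ast$R) from $\Delta\mathbin{,}\varphi\vdash\psi$ infer $\Delta\vdash\varphi-\!\!\ast\,\psi$; ($-\!\ast$L) from $\Delta_1\vdash\varphi$, $\Delta(\Delta_2\mathbin{,}\psi)\vdash\chi$ infer $\Delta((\Delta_1\mathbin{,}\Delta_2)\mathbin{,}(\varphi-\!\!\ast\,\psi))\vdash\chi$; ($\top$R) $\varnothing_a\vdash\top$; ($\top$L) from $\Delta(\varnothing_a)\vdash\varphi$ infer $\Delta(\top)\vdash\varphi$; ($\wedge$R) from $\Delta_1\vdash\varphi$, $\Delta_2\vdash\psi$ infer $\Delta_1\mathbin{;}\Delta_2\vdash\varphi\wedge\psi$;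 ($\wedge$L) from $\Delta(\varphi\mathbin{;}\psi)\vdash\chi$ infer $\Delta(\varphi\wedge\psi)\vdash\chi$; ($\to$R) from $\Delta\mathbin{;}\varphi\vdash\psi$ infer $\Delta\vdash\varphi\to\psi$; ($\to$L) from $\Delta_1\vdash\varphi$, $\Delta(\Delta_2\mathbin{;}\psi)\vdash\chi$ infer $\Delta((\Delta_1\mathbin{;}\Delta_2)\mathbin{;}(\varphi\to\psi))\vdash\chi$; ($\bot$L) $\Delta(\bot)\vdash\varphi$; ($\vee$R1/2) from $\Delta\vdash\varphi$ (resp. $\Delta\vdash\psi$) infer $\Delta\vdash\varphi\vee\psi$; ($\vee$L) from $\Delta(\varphi)\vdash\chi$, $\Delta(\psi)\vdash\chi$ infer $\Delta(\varphi\vee\psi)\vdash\chi$. (No cut rule.) *)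

theory Defs
  imports Main
begin

datatype 'a fml =
    Top | Bot | And "'a fml" "'a fml" | Or "'a fml" "'a fml" | Imp "'a fml" "'a fml"
  | Emp | Star "'a fml" "'a fml" | Wand "'a fml" "'a fml" | Atom 'a

datatype 'a bunch =
    Fm "'a fml"
  | EmpM
  | EmpA
  | Comma "'a bunch" "'a bunch"
  | Semi "'a bunch" "'a bunch"

datatype 'a ctx =
    Hole
  | CommaL "'a ctx" "'a bunch"
  | CommaR "'a bunch" "'a ctx"
  | SemiL "'a ctx" "'a bunch"
  | SemiR "'a bunch" "'a ctx"

primrec fill :: "'a ctx \<Rightarrow> 'a bunch \<Rightarrow> 'a bunch" where
  "fill Hole G = G"
| "fill (CommaL D B) G = Comma (fill D G) B"
| "fill (CommaR B D) G = Comma B (fill D G)"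
| "fill (SemiL D B) G = Semi (fill D G) B"
| "fill (SemiR B D) G = Semi B (fill D G)"

inductive beq :: "'a bunch \<Rightarrow> 'a bunch \<Rightarrow> bool" where
  comma_comm: "beq (Comma A B) (Comma B A)"
| comma_assoc: "beq (Comma A (Comma B C)) (Comma (Comma A B) C)"
| comma_unit: "beq (Comma A EmpM) A"
| semi_comm: "beq (Semi A B) (Semi B A)"
| semi_assoc: "beq (Semi A (Semi B C)) (Semi (Semi A B) C)"
| semi_unit: "beq (Semi A EmpA) A"
| refl: "beq A A"
| sym: "beq A B \<Longrightarrow> beq B A"
| trans: "beq A B \<Longrightarrow> beq B C \<Longrightarrow> beq A C"
| ctx: "beq A B \<Longrightarrow> beq (fill D A) (fill D B)"

inductive cf :: "'a bunch \<Rightarrow> 'a fml \<Rightarrow> bool" where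
  ax: "cf (Fm (Atom a)) (Atom a)"
| equiv: "cf D' p \<Longrightarrow> beq D D' \<Longrightarrow> cf D p"
| WSemi: "cf (fill D D1) p \<Longrightarrow> cf (fill D (Semi D1 D2)) p"
| CSemi: "cf (fill D (Semi D1 D1)) p \<Longrightarrow> cf (fill D D1) p"
| empR: "cf EmpM Emp"
| empL: "cf (fill D EmpM) p \<Longrightarrow> cf (fill D (Fm Emp)) p"
| starR: "cf D1 p \<Longrightarrow> cf D2 q \<Longrightarrow> cf (Comma D1 D2) (Star p q)"
| starL: "cf (fill D (Comma (Fm p) (Fm q))) r \<Longrightarrow> cf (fill D (Fm (Star p q))) r"
| wandR: "cf (Comma D (Fm p)) q \<Longrightarrow> cf D (Wand p q)"
| wandL: "cf D1 p \<Longrightarrow> cf (fill D (Comma D2 (Fm q))) r \<Longrightarrow>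
          cf (fill D (Comma (Comma D1 D2) (Fm (Wand p q)))) r"
| topR: "cf EmpA Top"
| topL: "cf (fill D EmpA) p \<Longrightarrow> cf (fill D (Fm Top)) p"
| andR: "cf D1 p \<Longrightarrow> cf D2 q \<Longrightarrow> cf (Semi D1 D2) (And p q)"
| andL: "cf (fill D (Semi (Fm p) (Fm q))) r \<Longrightarrow> cf (fill D (Fm (And p q))) r"
| impR: "cf (Semi D (Fm p)) q \<Longrightarrow> cf D (Imp p q)"
| impL: "cf D1 p \<Longrightarrow> cf (fill D (Semi D2 (Fm q))) r \<Longrightarrow>
          cf (fill D (Semi (Semi D1 D2) (Fm (Imp p q)))) r"
| botL: "cf (fill D (Fm Bot)) p"
| orR1: "cf D p \<Longrightarrow> cf D (Or p q)"
| orR2: "cf D q \<Longrightarrow> cf D (Or p q)"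
| orL: "cf (fill D (Fm p)) r \<Longrightarrow> cf (fill D (Fm q)) r \<Longrightarrow> cf (fill D (Fm (Or p q))) r"

end

theory Submission
  imports Defs
begin

text \<open>Let \<open>B\<close> be the bunch that the left rule for \<open>A \<in> {\<phi> \<and> \<psi>, \<phi> * \<psi>, \<top>, emp}\<close> puts in
  place of \<open>A\<close>. Replacing an arbitrary set of leaf occurrences of \<open>A\<close> by \<open>B\<close> commutes with bunch
  equivalence, and every cut-free derivation of \<open>\<Gamma> \<turnstile> \<chi>\<close> transforms, rule by rule, into one of
  the replaced sequent: the only case where a replaced occurrence is principal is the left rule for
  \<open>A\<close> itself, whose premise is already the replaced sequent. Replacing a \<^emph>\<open>set\<close> of occurrences,
  rather than one, keeps the induction closed under contraction and under the rules that add
  formulas to the antecedent.\<close>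

inductive replaces :: "'a fml \<Rightarrow> 'a bunch \<Rightarrow> 'a bunch \<Rightarrow> 'a bunch \<Rightarrow> bool" for A B where
  replaces_leaf: "replaces A B (Fm A) B"
| replaces_refl: "replaces A B X X"
| replaces_Comma: "replaces A B X X' \<Longrightarrow> replaces A B Y Y' \<Longrightarrow> replaces A B (Comma X Y) (Comma X' Y')"
| replaces_Semi: "replaces A B X X' \<Longrightarrow> replaces A B Y Y' \<Longrightarrow> replaces A B (Semi X Y) (Semi X' Y')"

inductive ctx_replaces :: "'a fml \<Rightarrow> 'a bunch \<Rightarrow> 'a ctx \<Rightarrow> 'a ctx \<Rightarrow> bool" for A B where
  "ctx_replaces A B Hole Hole"
| "ctx_replaces A B D D' \<Longrightarrow> replaces A B X X' \<Longrightarrow> ctx_replaces A B (CommaL D X) (CommaL D' X')"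
| "ctx_replaces A B D D' \<Longrightarrow> replaces A B X X' \<Longrightarrow> ctx_replaces A B (CommaR X D) (CommaR X' D')"
| "ctx_replaces A B D D' \<Longrightarrow> replaces A B X X' \<Longrightarrow> ctx_replaces A B (SemiL D X) (SemiL D' X')"
| "ctx_replaces A B D D' \<Longrightarrow> replaces A B X X' \<Longrightarrow> ctx_replaces A B (SemiR X D) (SemiR X' D')"

lemma replaces_Comma_iff:
  "replaces A B (Comma X Y) Z \<longleftrightarrow> (\<exists>X' Y'. Z = Comma X' Y' \<and> replaces A B X X' \<and> replaces A B Y Y')"
  by (rule iffI, erule replaces.cases) (auto intro: replaces.intros)

lemma replaces_Semi_iff:
  "replaces A B (Semi X Y) Z \<longleftrightarrow> (\<exists>X' Y'. Z = Semi X' Y' \<and> replaces A B X X' \<and> replaces A B Y Y')"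
  by (rule iffI, erule replaces.cases) (auto intro: replaces.intros)

lemma replaces_EmpM_iff: "replaces A B EmpM Z \<longleftrightarrow> Z = EmpM"
  by (rule iffI, erule replaces.cases) (auto intro: replaces.intros)

lemma replaces_EmpA_iff: "replaces A B EmpA Z \<longleftrightarrow> Z = EmpA"
  by (rule iffI, erule replaces.cases) (auto intro: replaces.intros)

lemma replaces_Fm_iff: "replaces A B (Fm f) Z \<longleftrightarrow> Z = Fm f \<or> f = A \<and> Z = B"
  by (rule iffI, erule replaces.cases) (auto intro: replaces.intros)

lemma ctx_replaces_refl: "ctx_replaces A B D D"
  by (induction D) (auto intro: ctx_replaces.intros replaces_refl)

lemma replaces_fill:
  "ctx_replaces A B D D' \<Longrightarrow> replaces A B X X' \<Longrightarrow> replaces A B (fill D X) (fill D' X')"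
  by (induction rule: ctx_replaces.induct) (auto intro: replaces.intros)

lemma replaces_fill_inv:
  "replaces A B (fill D X) Z \<Longrightarrow> \<exists>D' X'. Z = fill D' X' \<and> ctx_replaces A B D D' \<and> replaces A B X X'"
proof (induction D arbitrary: Z)
  case Hole
  then show ?case by (metis fill.simps(1) ctx_replaces.intros(1))
next
  case (CommaL D Y)
  then show ?case by (simp add: replaces_Comma_iff) (metis fill.simps(2) ctx_replaces.intros(2))
next
  case (CommaR Y D)
  then show ?case by (simp add: replaces_Comma_iff) (metis fill.simps(3) ctx_replaces.intros(3))
next
  case (SemiL D Y)
  then show ?case by (simp add: replaces_Semi_iff) (metis fill.simps(4) ctx_replaces.intros(4))
next
  case (SemiR Y D)
  then show ?case by (simp add: replaces_Semi_iff) (metis fill.simps(5) ctx_replaces.intros(5))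
qed

lemma beq_replaces_bisim:
  "beq G H \<Longrightarrow> (\<forall>G'. replaces A B G G' \<longrightarrow> (\<exists>H'. replaces A B H H' \<and> beq G' H'))
     \<and> (\<forall>H'. replaces A B H H' \<longrightarrow> (\<exists>G'. replaces A B G G' \<and> beq G' H'))"
proof (induction rule: beq.induct)
  case (sym X Y)
  then show ?case by (blast intro: beq.sym)
next
  case (trans X Y Z)
  then show ?case by (blast intro: beq.trans)
next
  case (comma_assoc X Y Z)
  then show ?case by (fastforce simp: replaces_Comma_iff intro: beq.comma_assoc)
next
  case (semi_assoc X Y Z)
  then show ?case by (fastforce simp: replaces_Semi_iff intro: beq.semi_assoc)
next
  case (ctx X Y D)
  then show ?case by (blast dest: replaces_fill_inv intro: replaces_fill beq.ctx)
qed (auto simp: replaces_Comma_iff replaces_Semi_iff replaces_EmpM_iff replaces_EmpA_iff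
          intro: beq.intros replaces.intros)

lemma beq_replaces:
  "beq G H \<Longrightarrow> replaces A B G G' \<Longrightarrow> \<exists>H'. replaces A B H H' \<and> beq G' H'"
  using beq_replaces_bisim by blast

definition invertible_left :: "'a fml \<Rightarrow> 'a bunch \<Rightarrow> bool" where
  "invertible_left A B \<longleftrightarrow> (\<exists>p q. A = And p q \<and> B = Semi (Fm p) (Fm q))
     \<or> (\<exists>p q. A = Star p q \<and> B = Comma (Fm p) (Fm q))
     \<or> A = Top \<and> B = EmpA \<or> A = Emp \<and> B = EmpM"

lemma cf_replaces_left_rule:
  assumes rule: "\<And>E. cf (fill E P) r \<Longrightarrow> cf (fill E (Fm f)) r"
    and IH: "\<And>Z. replaces A B (fill D P) Z \<Longrightarrow> cf Z r"
    and principal: "f = A \<Longrightarrow> P = B"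
    and "replaces A B (fill D (Fm f)) Y"
  shows "cf Y r"
proof -
  obtain D' X' where Y: "Y = fill D' X'" and D': "ctx_replaces A B D D'"
    and "replaces A B (Fm f) X'"
    using \<open>replaces A B (fill D (Fm f)) Y\<close> replaces_fill_inv by blast
  then consider "X' = Fm f" | "f = A" "X' = B"
    by (auto simp: replaces_Fm_iff)
  then show ?thesis
  proof cases
    case 1
    then show ?thesis using Y D' by (auto intro: rule IH replaces_fill replaces_refl)
  next
    case 2
    with Y D' principal show ?thesis by (metis IH replaces_fill replaces_refl)
  qed
qed

lemma cf_replaces:
  "cf G r \<Longrightarrow> invertible_left A B \<Longrightarrow> replaces A B G Y \<Longrightarrow> cf Y r"
proof (induction arbitrary: Y rule: cf.induct)
  case (ax a)
  then show ?case by (auto simp: replaces_Fm_iff invertible_left_def intro: cf.ax)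
next
  case (equiv D' p D)
  then show ?case by (meson beq_replaces cf.equiv)
next
  case (WSemi D D1 p D2)
  then show ?case by (metis replaces_fill_inv replaces_Semi_iff replaces_fill cf.WSemi)
next
  case (CSemi D D1 p)
  then show ?case by (metis replaces_fill_inv replaces_fill replaces_Semi cf.CSemi)
next
  case empR
  then show ?case by (simp add: replaces_EmpM_iff cf.empR)
next
  case (empL D p)
  then show ?case by (auto simp: invertible_left_def intro: cf_replaces_left_rule cf.empL)
next
  case (starR D1 p D2 q)
  then show ?case by (auto simp: replaces_Comma_iff intro: cf.starR)
next
  case (starL D p q r)
  then show ?case by (auto simp: invertible_left_def intro: cf_replaces_left_rule cf.starL)
next
  case (wandR D p q)
  then show ?case by (metis replaces_Comma replaces_refl cf.wandR)
next
  case (wandL D1 p D D2 q r)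
  then obtain D' D1' D2' where "Y = fill D' (Comma (Comma D1' D2') (Fm (Wand p q)))"
    and "ctx_replaces A B D D'" "replaces A B D1 D1'" "replaces A B D2 D2'"
    by (fastforce simp: invertible_left_def replaces_Comma_iff replaces_Fm_iff dest!: replaces_fill_inv)
  with wandL show ?case by (metis cf.wandL replaces_fill replaces_Comma replaces_refl)
next
  case topR
  then show ?case by (simp add: replaces_EmpA_iff cf.topR)
next
  case (topL D p)
  then show ?case by (auto simp: invertible_left_def intro: cf_replaces_left_rule cf.topL)
next
  case (andR D1 p D2 q)
  then show ?case by (auto simp: replaces_Semi_iff intro: cf.andR)
next
  case (andL D p q r)
  then show ?case by (auto simp: invertible_left_def intro: cf_replaces_left_rule cf.andL)
next
  case (impR D p q)
  then show ?case by (metis replaces_Semi replaces_refl cf.impR)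
next
  case (impL D1 p D D2 q r)
  then obtain D' D1' D2' where "Y = fill D' (Semi (Semi D1' D2') (Fm (Imp p q)))"
    and "ctx_replaces A B D D'" "replaces A B D1 D1'" "replaces A B D2 D2'"
    by (fastforce simp: invertible_left_def replaces_Semi_iff replaces_Fm_iff dest!: replaces_fill_inv)
  with impL show ?case by (metis cf.impL replaces_fill replaces_Semi replaces_refl)
next
  case (botL D p)
  then obtain D' where "Y = fill D' (Fm Bot)"
    by (fastforce simp: invertible_left_def replaces_Fm_iff dest!: replaces_fill_inv)
  then show ?case by (simp add: cf.botL)
next
  case (orR1 D p q)
  then show ?case by (metis cf.orR1)
next
  case (orR2 D q p)
  then show ?case by (metis cf.orR2)
next
  case (orL D p r q)
  then obtain D' where "Y = fill D' (Fm (Or p q))" and "ctx_replaces A B D D'"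
    by (fastforce simp: invertible_left_def replaces_Fm_iff dest!: replaces_fill_inv)
  with orL show ?case by (metis cf.orL replaces_fill replaces_refl)
qed

lemma cf_invertible_left:
  "invertible_left A B \<Longrightarrow> cf (fill D (Fm A)) r \<Longrightarrow> cf (fill D B) r"
  by (metis cf_replaces replaces_fill ctx_replaces_refl replaces_leaf)

theorem lemma3p4:
  fixes D :: "'a ctx" and p q r :: "'a fml"
  shows "(cf (fill D (Fm (And p q))) r \<longrightarrow> cf (fill D (Semi (Fm p) (Fm q))) r)
       \<and> (cf (fill D (Fm (Star p q))) r \<longrightarrow> cf (fill D (Comma (Fm p) (Fm q))) r)
       \<and> (cf (fill D (Fm Top)) r \<longrightarrow> cf (fill D EmpA) r)
       \<and> (cf (fill D (Fm Emp)) r \<longrightarrow> cf (fill D EmpM) r)"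
  by (intro conjI impI; erule cf_invertible_left[rotated]) (simp_all add: invertible_left_def)

end
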